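(* Let $S = R \cup B$ be a finite set of points in the plane in general position (no three collinear), partitioned into red points $R$ and blue points $B$, with $|R| \ge 2$ and $|B| \ge 2$. Then $S$ contains a balanced $4$-hole.
   Context: A hole of $S$ is a simple polygon $Q$ whose vertices are points of $S$ and whose interior contains no point of $S$; a $k$-hole is a hole with $k$ vertices. Holes need not be convex. A $4$-hole is balanced if it has exactly two red and two blue vertices. *)

theory Defs
  imports "HOL-Analysis.Analysis"
begin

text \<open>Points of the plane are represented as complex numbers.\<close>

definition general_position :: "complex set \<Rightarrow> bool" where
  "general_position S \<longleftrightarrow>
     (\<forall>a\<in>S. \<forall>b\<in>S. \<forall>c\<in>S. a \<noteq> b \<and> a \<noteq> c \<and> b \<noteq> c \<longrightarrow> \<not> collinear {a, b, c})"

definition quad_path :: "complex \<Rightarrow> complex \<Rightarrow> complex \<Rightarrow> complex \<Rightarrow> real \<Rightarrow> complex" where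
  "quad_path a b c d = linepath a b +++ linepath b c +++ linepath c d +++ linepath d a"

definition is_4hole :: "complex set \<Rightarrow> complex \<Rightarrow> complex \<Rightarrow> complex \<Rightarrow> complex \<Rightarrow> bool" where
  "is_4hole S a b c d \<longleftrightarrow>
     a \<in> S \<and> b \<in> S \<and> c \<in> S \<and> d \<in> S \<and> distinct [a, b, c, d] \<and>
     simple_path (quad_path a b c d) \<and>
     inside (path_image (quad_path a b c d)) \<inter> S = {}"

end

theory Submission
  imports Defs
begin

text \<open>Among all quadruples of two red and two blue points, take one whose convex hull contains
  the fewest points of \<open>S\<close>. If a further point \<open>p\<close> of, say, red colour lay in that hull, minimality
  would force each red vertex into the hull of \<open>p\<close> and the other three vertices; then the
  hull has only the two blue vertices as extreme points, so \<open>p\<close> lies on the segment between them,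
  contradicting general position. Hence the hull contains no point of \<open>S\<close> besides its
  vertices. Ordering these four vertices as the closed tour of least length gives a quadrilateral
  whose opposite sides do not cross (uncrossing shortens a tour), i.e. a simple polygon, and its
  inside lies in the convex hull: a balanced 4-hole.\<close>

lemma in_segment_imp_collinear:
  fixes a b x :: "'a::euclidean_space"
  shows "x \<in> closed_segment a b \<Longrightarrow> collinear {a, x, b}"
  by (simp add: between_imp_collinear between_mem_segment)

lemma closed_segment_Int_adjacent:
  fixes a b c :: "'a::euclidean_space"
  assumes "\<not> collinear {a, b, c}"
  shows "closed_segment a b \<inter> closed_segment b c \<subseteq> {b}"
proof
  fix x assume x: "x \<in> closed_segment a b \<inter> closed_segment b c"
  show "x \<in> {b}"
  proof (rule ccontr)
    assume "x \<notin> {b}"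
    moreover have "collinear {a, b, x}"
      using in_segment_imp_collinear[of x a b] x by (simp add: insert_commute)
    moreover have "collinear {b, x, c}" using in_segment_imp_collinear[of x b c] x by simp
    ultimately show False using collinear_3_trans assms by fastforce
  qed
qed

text \<open>Triangle inequality through the crossing point \<open>x\<close>; it is strict because \<open>x\<close> cannot lie on
  the segment \<open>pr\<close> when no three of the points are collinear.\<close>
lemma crossing_segments_dist_less:
  fixes p q r s x :: "'a::euclidean_space"
  assumes x: "x \<in> closed_segment p q" "x \<in> closed_segment r s"
    and nc1: "\<not> collinear {r, s, p}" and nc2: "\<not> collinear {q, p, r}"
  shows "dist p r + dist q s < dist p q + dist r s"
proof -
  have pq: "dist p q = dist p x + dist x q" and rs: "dist r s = dist r x + dist x s"
    using x between between_mem_segment by blast+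
  have "dist q s \<le> dist q x + dist x s" by (rule dist_triangle)
  moreover have "dist p r < dist p x + dist x r"
  proof -
    have "dist p r \<noteq> dist p x + dist x r"
    proof
      assume "dist p r = dist p x + dist x r"
      then have xpr: "x \<in> closed_segment p r" using between between_mem_segment by blast
      show False
      proof (cases "x = p")
        case True
        then show ?thesis
          using x(2) in_segment_imp_collinear[of p r s] nc1 by (simp add: insert_commute)
      next
        case False
        have "collinear {q, p, x}"
          using in_segment_imp_collinear[OF x(1)] by (simp add: insert_commute)
        moreover have "collinear {p, x, r}" using in_segment_imp_collinear[OF xpr] .
        ultimately show False using collinear_3_trans False nc2 by blast
      qed
    qed
    then show ?thesis using dist_triangle[of p r x] by linarith
  qed
  ultimately show ?thesis using pq rs by (simp add: dist_commute)
qed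

lemma general_position_imp_not_collinear:
  "general_position S \<Longrightarrow> a \<in> S \<Longrightarrow> b \<in> S \<Longrightarrow> c \<in> S \<Longrightarrow> distinct [a, b, c]
    \<Longrightarrow> \<not> collinear {a, b, c}"
  unfolding general_position_def by auto

definition tour_length :: "complex \<Rightarrow> complex \<Rightarrow> complex \<Rightarrow> complex \<Rightarrow> real" where
  "tour_length a b c d = dist a b + dist b c + dist c d + dist d a"

lemma shortest_tour_noncrossing:
  fixes p q r s :: complex
  assumes gp: "general_position S" and sub: "{p, q, r, s} \<subseteq> S" and dst: "distinct [p, q, r, s]"
    and short1: "tour_length p q r s \<le> tour_length p r q s"
    and short2: "tour_length p q r s \<le> tour_length p q s r"
  shows "closed_segment p q \<inter> closed_segment r s = {}"
    and "closed_segment q r \<inter> closed_segment s p = {}"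
proof -
  have nc: "\<not> collinear {a, b, c}"
    if "a \<in> {p, q, r, s}" "b \<in> {p, q, r, s}" "c \<in> {p, q, r, s}" "distinct [a, b, c]" for a b c
    using general_position_imp_not_collinear[OF gp] that sub by blast
  show "closed_segment p q \<inter> closed_segment r s = {}"
  proof (rule ccontr)
    assume "closed_segment p q \<inter> closed_segment r s \<noteq> {}"
    then obtain x where "x \<in> closed_segment p q" "x \<in> closed_segment r s" by blast
    from crossing_segments_dist_less[OF this nc[of r s p] nc[of q p r]] dst
    have "dist p r + dist q s < dist p q + dist r s" by auto
    with short1 show False by (simp add: tour_length_def dist_commute)
  qed
  show "closed_segment q r \<inter> closed_segment s p = {}"
  proof (rule ccontr)
    assume "closed_segment q r \<inter> closed_segment s p \<noteq> {}"
    then obtain x where "x \<in> closed_segment q r" "x \<in> closed_segment s p" by blast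
    from crossing_segments_dist_less[OF this nc[of s p q] nc[of r q s]] dst
    have "dist q s + dist r p < dist q r + dist s p" by auto
    with short2 show False by (simp add: tour_length_def dist_commute)
  qed
qed

lemma noncrossing_order_exists:
  fixes a b c d :: complex
  assumes gp: "general_position S" and sub: "{a, b, c, d} \<subseteq> S" and dst: "distinct [a, b, c, d]"
  obtains p q r s where "{p, q, r, s} = {a, b, c, d}" "distinct [p, q, r, s]"
    "closed_segment p q \<inter> closed_segment r s = {}"
    "closed_segment q r \<inter> closed_segment s p = {}"
proof -
  have tour_length_reverse: "tour_length p q r s = tour_length p s r q" for p q r s
    by (simp add: tour_length_def dist_commute)
  consider "tour_length a b c d \<le> tour_length a c b d" "tour_length a b c d \<le> tour_length a b d c"
    | "tour_length a c b d \<le> tour_length a b c d" "tour_length a c b d \<le> tour_length a b d c"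
    | "tour_length a b d c \<le> tour_length a b c d" "tour_length a b d c \<le> tour_length a c b d"
    by linarith
  then show thesis
  proof cases
    case 1
    from shortest_tour_noncrossing[OF gp sub dst 1] show thesis
      using dst by (intro that[of a b c d]) auto
  next
    case 2
    then have "tour_length a c b d \<le> tour_length a c d b"
      using tour_length_reverse[of a b d c] by simp
    from shortest_tour_noncrossing[OF gp _ _ \<open>tour_length a c b d \<le> tour_length a b c d\<close> this]
    show thesis
      using sub dst by (intro that[of a c b d]) auto
  next
    case 3
    then have "tour_length a b d c \<le> tour_length a d b c"
      using tour_length_reverse[of a c b d] by simp
    from shortest_tour_noncrossing[OF gp _ _ this \<open>tour_length a b d c \<le> tour_length a b c d\<close>]
    show thesis
      using sub dst by (intro that[of a b d c]) auto
  qed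
qed

lemma path_image_quad_path:
  "path_image (quad_path a b c d) =
    closed_segment a b \<union> closed_segment b c \<union> closed_segment c d \<union> closed_segment d a"
  unfolding quad_path_def by (simp add: path_image_join Un_assoc)

lemma simple_path_quad_path:
  fixes a b c d :: complex
  assumes dst: "distinct [a, b, c, d]"
    and nc: "\<not> collinear {a, b, c}" "\<not> collinear {b, c, d}"
      "\<not> collinear {c, d, a}" "\<not> collinear {d, a, b}"
    and opp: "closed_segment a b \<inter> closed_segment c d = {}"
      "closed_segment b c \<inter> closed_segment d a = {}"
  shows "simple_path (quad_path a b c d)"
proof -
  note adj = closed_segment_Int_adjacent[OF nc(1)] closed_segment_Int_adjacent[OF nc(2)]
    closed_segment_Int_adjacent[OF nc(3)] closed_segment_Int_adjacent[OF nc(4)]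
  have "arc (linepath c d +++ linepath d a)"
    using dst adj by (intro arc_join) auto
  then have "arc (linepath b c +++ linepath c d +++ linepath d a)"
    using dst adj opp by (intro arc_join) (auto simp: path_image_join)
  then show ?thesis
    unfolding quad_path_def using dst adj opp
    by (intro simple_path_join_loop) (auto simp: path_image_join)
qed

lemma inside_quad_path_subset:
  "inside (path_image (quad_path a b c d)) \<subseteq> convex hull {a, b, c, d} - path_image (quad_path a b c d)"
proof (rule inside_subset)
  let ?H = "convex hull {a, b, c, d}"
  have bounded: "bounded ?H" by (simp add: finite_imp_bounded_convex_hull)
  show "connected (- ?H)"
    by (rule connected_complement_bounded_convex) (use bounded in auto)
  show "\<not> bounded (- ?H)"
    using bounded bounded_Un[of ?H "- ?H"] by auto
  have "closed_segment x y \<subseteq> ?H" if "x \<in> {a, b, c, d}" "y \<in> {a, b, c, d}" for x y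
    using that by (intro closed_segment_subset convex_convex_hull hull_inc)
  then have "path_image (quad_path a b c d) \<subseteq> ?H"
    unfolding path_image_quad_path by (meson Un_least insertI1 insertI2)
  then show "(?H - path_image (quad_path a b c d)) \<union> - ?H = - path_image (quad_path a b c d)"
    by auto
qed

lemma empty_convex_hull_imp_4hole:
  fixes a b c d :: complex
  assumes gp: "general_position S" and sub: "{a, b, c, d} \<subseteq> S" and dst: "distinct [a, b, c, d]"
    and empty: "S \<inter> convex hull {a, b, c, d} \<subseteq> {a, b, c, d}"
  obtains p q r s where "{p, q, r, s} = {a, b, c, d}" "is_4hole S p q r s"
proof -
  obtain p q r s where pqrs: "{p, q, r, s} = {a, b, c, d}" "distinct [p, q, r, s]"
    and opp: "closed_segment p q \<inter> closed_segment r s = {}"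
      "closed_segment q r \<inter> closed_segment s p = {}"
    using noncrossing_order_exists[OF gp sub dst] .
  have nc: "\<not> collinear {x, y, z}"
    if "x \<in> {p, q, r, s}" "y \<in> {p, q, r, s}" "z \<in> {p, q, r, s}" "distinct [x, y, z]" for x y z
    using that sub pqrs(1) by (intro general_position_imp_not_collinear[OF gp]) auto
  have simple: "simple_path (quad_path p q r s)"
    by (rule simple_path_quad_path[OF pqrs(2) _ _ _ _ opp]; rule nc) (use pqrs(2) in auto)
  have "{p, q, r, s} \<subseteq> path_image (quad_path p q r s)"
    unfolding path_image_quad_path by auto
  then have "inside (path_image (quad_path p q r s)) \<inter> S = {}"
    using inside_quad_path_subset[of p q r s] empty pqrs(1) by auto
  with simple have "is_4hole S p q r s"
    unfolding is_4hole_def using sub pqrs by auto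
  with pqrs(1) show thesis by (rule that)
qed

lemma hull_insert_exchange:
  assumes "u \<in> P hull (insert v T)" and "v \<in> P hull (insert u T)"
  shows "P hull (insert u T) = P hull (insert v T)"
proof -
  have "P hull (insert u T) = P hull (insert v (insert u T))"
    using hull_redundant[OF assms(2)] by simp
  also have "\<dots> = P hull (insert u (insert v T))" by (simp add: insert_commute)
  also have "\<dots> = P hull (insert v T)" using hull_redundant[OF assms(1)] .
  finally show ?thesis .
qed

text \<open>Under the hypotheses the three hulls coincide, so every extreme point of the common hull
  lies in \<open>{y1, y2}\<close>, and by Krein--Milman the hull is the segment \<open>y1 y2\<close>.\<close>
lemma convex_hull_exchange_imp_in_segment:
  fixes p x1 x2 y1 y2 :: "'a::euclidean_space"
  assumes "x1 \<noteq> x2" "p \<noteq> x1" "p \<noteq> x2"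
    and p: "p \<in> convex hull {x1, x2, y1, y2}"
    and x1: "x1 \<in> convex hull {p, x2, y1, y2}"
    and x2: "x2 \<in> convex hull {p, x1, y1, y2}"
  shows "p \<in> closed_segment y1 y2"
proof -
  let ?K = "convex hull {x1, x2, y1, y2}"
  have K1: "convex hull {p, x2, y1, y2} = ?K"
    using hull_insert_exchange[OF p x1] .
  have "convex hull {p, x1, y1, y2} = convex hull {x2, x1, y1, y2}"
    using p x2 by (intro hull_insert_exchange) (simp_all add: insert_commute)
  then have K2: "convex hull {p, x1, y1, y2} = ?K" by (simp add: insert_commute)
  have "{e. e extreme_point_of ?K} \<subseteq> {y1, y2}"
  proof
    fix e assume "e \<in> {e. e extreme_point_of ?K}"
    then have "e extreme_point_of ?K" by simp
    then have "e \<in> {x1, x2, y1, y2}" "e \<in> {p, x2, y1, y2}" "e \<in> {p, x1, y1, y2}"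
      using extreme_point_of_convex_hull K1 K2 by metis+
    with assms(1-3) show "e \<in> {y1, y2}" by auto
  qed
  then have "?K \<subseteq> convex hull {y1, y2}"
    using Krein_Milman_Minkowski[of ?K] hull_mono
    by (metis convex_convex_hull finite.emptyI finite.insertI finite_imp_compact_convex_hull)
  then show ?thesis using p by (auto simp: segment_convex_hull)
qed

lemma card_Int_convex_hull_less:
  assumes "finite S" "x \<in> S" "x \<in> T" "x \<notin> convex hull T'"
    and "T' \<subseteq> insert p T" "p \<in> convex hull T"
  shows "card (S \<inter> convex hull T') < card (S \<inter> convex hull T)"
proof (rule psubset_card_mono)
  have "convex hull T' \<subseteq> convex hull T"
    by (rule hull_minimal) (use assms(5,6) hull_subset[of T convex] in auto)
  then show "S \<inter> convex hull T' \<subset> S \<inter> convex hull T"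
    using assms(2-4) hull_inc[of x T convex] by blast
qed (use assms(1) in simp)

lemma minimal_convex_hull_excludes:
  fixes p x1 x2 y1 y2 :: "'a::euclidean_space"
  assumes S: "finite S" "{x1, x2, y1, y2} \<subseteq> S"
    and p: "p \<notin> {x1, x2}" "p \<notin> closed_segment y1 y2" and "x1 \<noteq> x2"
    and min1: "card (S \<inter> convex hull {x1, x2, y1, y2}) \<le> card (S \<inter> convex hull {p, x2, y1, y2})"
    and min2: "card (S \<inter> convex hull {x1, x2, y1, y2}) \<le> card (S \<inter> convex hull {p, x1, y1, y2})"
  shows "p \<notin> convex hull {x1, x2, y1, y2}"
proof
  assume p_in: "p \<in> convex hull {x1, x2, y1, y2}"
  have "x1 \<in> convex hull {p, x2, y1, y2}"
  proof (rule ccontr)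
    assume "x1 \<notin> convex hull {p, x2, y1, y2}"
    from card_Int_convex_hull_less[OF S(1) _ _ this _ p_in] S(2) min1 show False by auto
  qed
  moreover have "x2 \<in> convex hull {p, x1, y1, y2}"
  proof (rule ccontr)
    assume "x2 \<notin> convex hull {p, x1, y1, y2}"
    from card_Int_convex_hull_less[OF S(1) _ _ this _ p_in] S(2) min2 show False by auto
  qed
  ultimately have "p \<in> closed_segment y1 y2"
    using convex_hull_exchange_imp_in_segment[OF \<open>x1 \<noteq> x2\<close> _ _ p_in] p(1) by auto
  with p(2) show False ..
qed

lemma card_ge_2_obtain:
  assumes "card A \<ge> 2"
  obtains a b where "a \<in> A" "b \<in> A" "a \<noteq> b"
proof -
  obtain T where "T \<subseteq> A" "card T = 2"
    using assms obtain_subset_with_card_n by metis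
  then show thesis using that by (auto simp: card_2_iff)
qed

lemma minimal_balanced_convex_hull_empty:
  fixes R B :: "complex set"
  assumes "finite R" "finite B" "general_position (R \<union> B)"
    and r: "r1 \<in> R" "r2 \<in> R" "r1 \<noteq> r2" and b: "b1 \<in> B" "b2 \<in> B" "b1 \<noteq> b2"
    and min: "\<And>r1' r2' b1' b2'. r1' \<in> R \<Longrightarrow> r2' \<in> R \<Longrightarrow> r1' \<noteq> r2' \<Longrightarrow>
      b1' \<in> B \<Longrightarrow> b2' \<in> B \<Longrightarrow> b1' \<noteq> b2' \<Longrightarrow>
      card ((R \<union> B) \<inter> convex hull {r1, r2, b1, b2})
        \<le> card ((R \<union> B) \<inter> convex hull {r1', r2', b1', b2'})"
  shows "(R \<union> B) \<inter> convex hull {r1, r2, b1, b2} \<subseteq> {r1, r2, b1, b2}"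
proof -
  define S where "S = R \<union> B"
  have fin: "finite S" and sub: "{r1, r2, b1, b2} \<subseteq> S"
    using assms(1,2) r b by (auto simp: S_def)
  have off_segment: "p \<notin> closed_segment y1 y2"
    if "p \<in> S" "y1 \<in> S" "y2 \<in> S" "distinct [y1, p, y2]" for p y1 y2
    using in_segment_imp_collinear general_position_imp_not_collinear[OF assms(3)] that
    unfolding S_def by blast
  have swap: "{x1, x2, r1, r2} = {r1, r2, x1, x2}" for x1 x2 by auto
  have "p \<notin> convex hull {r1, r2, b1, b2}" if p: "p \<in> S" "p \<notin> {r1, r2, b1, b2}" for p
  proof (cases "p \<in> R")
    case True
    show ?thesis
    proof (rule minimal_convex_hull_excludes[OF fin sub])
      show "p \<notin> {r1, r2}" "r1 \<noteq> r2" using p r by auto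
      show "p \<notin> closed_segment b1 b2" using p b sub by (intro off_segment) auto
      show "card (S \<inter> convex hull {r1, r2, b1, b2}) \<le> card (S \<inter> convex hull {p, r2, b1, b2})"
        "card (S \<inter> convex hull {r1, r2, b1, b2}) \<le> card (S \<inter> convex hull {p, r1, b1, b2})"
        unfolding S_def using True p r b by (intro min; auto)+
    qed
  next
    case False
    then have "p \<in> B" using p(1) by (simp add: S_def)
    have "p \<notin> convex hull {b1, b2, r1, r2}"
    proof (rule minimal_convex_hull_excludes[OF fin])
      show "{b1, b2, r1, r2} \<subseteq> S" using sub by auto
      show "p \<notin> {b1, b2}" "b1 \<noteq> b2" using p b by auto
      show "p \<notin> closed_segment r1 r2" using p r sub by (intro off_segment) auto
      show "card (S \<inter> convex hull {b1, b2, r1, r2}) \<le> card (S \<inter> convex hull {p, b2, r1, r2})"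
        "card (S \<inter> convex hull {b1, b2, r1, r2}) \<le> card (S \<inter> convex hull {p, b1, r1, r2})"
        unfolding S_def swap[of b1 b2] swap[of p b2] swap[of p b1]
        using \<open>p \<in> B\<close> p r b by (intro min; auto)+
    qed
    then show ?thesis unfolding swap[of b1 b2] .
  qed
  then show ?thesis unfolding S_def by blast
qed

lemma balanced_empty_convex_hull_exists:
  fixes R B :: "complex set"
  assumes "finite R" "finite B" "general_position (R \<union> B)" "card R \<ge> 2" "card B \<ge> 2"
  obtains r1 r2 b1 b2 where "r1 \<in> R" "r2 \<in> R" "r1 \<noteq> r2" "b1 \<in> B" "b2 \<in> B" "b1 \<noteq> b2"
    "(R \<union> B) \<inter> convex hull {r1, r2, b1, b2} \<subseteq> {r1, r2, b1, b2}"
proof -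
  define balanced where "balanced = (\<lambda>(r1, r2, b1, b2).
    r1 \<in> R \<and> r2 \<in> R \<and> r1 \<noteq> r2 \<and> b1 \<in> B \<and> b2 \<in> B \<and> b1 \<noteq> b2)"
  define count where
    "count = (\<lambda>(r1, r2, b1, b2). card ((R \<union> B) \<inter> convex hull {r1, r2, b1, b2}))"
  obtain r1 r2 b1 b2 where "r1 \<in> R" "r2 \<in> R" "r1 \<noteq> r2" "b1 \<in> B" "b2 \<in> B" "b1 \<noteq> b2"
    using assms(4,5) card_ge_2_obtain by metis
  then have "balanced (r1, r2, b1, b2)" by (simp add: balanced_def)
  then obtain t where "balanced t" and t_min: "\<And>t'. balanced t' \<Longrightarrow> count t \<le> count t'"
    using ex_has_least_nat[of balanced _ count] by blast
  then obtain r1 r2 b1 b2 where t: "t = (r1, r2, b1, b2)"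
    and r: "r1 \<in> R" "r2 \<in> R" "r1 \<noteq> r2" and b: "b1 \<in> B" "b2 \<in> B" "b1 \<noteq> b2"
    unfolding balanced_def by auto
  have "(R \<union> B) \<inter> convex hull {r1, r2, b1, b2} \<subseteq> {r1, r2, b1, b2}"
  proof (rule minimal_balanced_convex_hull_empty[OF assms(1-3) r b])
    fix r1' r2' b1' b2'
    assume "r1' \<in> R" "r2' \<in> R" "r1' \<noteq> r2'" "b1' \<in> B" "b2' \<in> B" "b1' \<noteq> b2'"
    then show "card ((R \<union> B) \<inter> convex hull {r1, r2, b1, b2})
      \<le> card ((R \<union> B) \<inter> convex hull {r1', r2', b1', b2'})"
      using t_min[of "(r1', r2', b1', b2')"] unfolding t balanced_def count_def by simp
  qed
  with r b show thesis by (rule that)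
qed

theorem mainTheorem1:
  fixes R B :: "complex set"
  assumes "finite R" and "finite B" and "R \<inter> B = {}"
    and "general_position (R \<union> B)"
    and "card R \<ge> 2" and "card B \<ge> 2"
  shows "\<exists>a b c d. is_4hole (R \<union> B) a b c d \<and>
           card ({a, b, c, d} \<inter> R) = 2 \<and> card ({a, b, c, d} \<inter> B) = 2"
proof -
  obtain r1 r2 b1 b2 where r: "r1 \<in> R" "r2 \<in> R" "r1 \<noteq> r2" and b: "b1 \<in> B" "b2 \<in> B" "b1 \<noteq> b2"
    and empty: "(R \<union> B) \<inter> convex hull {r1, r2, b1, b2} \<subseteq> {r1, r2, b1, b2}"
    using balanced_empty_convex_hull_exists[OF assms(1,2,4-6)] .
  have "{r1, r2, b1, b2} \<subseteq> R \<union> B" "distinct [r1, r2, b1, b2]"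
    using r b assms(3) by auto
  then obtain p q u v where pquv: "{p, q, u, v} = {r1, r2, b1, b2}" "is_4hole (R \<union> B) p q u v"
    by (rule empty_convex_hull_imp_4hole[OF assms(4) _ _ empty])
  have "{p, q, u, v} \<inter> R = {r1, r2}" "{p, q, u, v} \<inter> B = {b1, b2}"
    unfolding pquv(1) using r b assms(3) by auto
  then show ?thesis
    using pquv(2) r(3) b(3) by (intro exI[of _ p] exI[of _ q] exI[of _ u] exI[of _ v]) simp
qed

end
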